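(* Let $M$ and $M'$ be as described in the context, with initial-state distribution $\rho$ and horizon $T$. If $\pi'_*$ is an optimal policy on $M'$, i.e. $V'_{\pi'_*}(\rho)\ge V'_{\pi'}(\rho)$ for every policy $\pi'$ on $M'$, then $\phi(\pi'_* )$ is an optimal policy on $M$, i.e. $V_{\phi(\pi'_* )}(\rho)\ge V_{\pi}(\rho)$ for every policy $\pi$ on $M$.
   Context: Fix integers $n\ge 1$ (agents/radars), $m\ge 1$ (targets), a horizon $T\ge 1$, and write $[m]=\{1,\dots,m\}$ and $\dagger$ for an extra "stop" symbol not in $[m]$. Let $S$ be a finite state space, $\rho$ a probability distribution on $S$, $\Omega_1,\dots,\Omega_n$ finite individual observation sets, $O(\omega\mid s)$ a probability distribution on $\Omega_1\times\dots\times\Omega_n$ for each $s\in S$, $P(s,\varepsilon,\cdot)$ a probability distribution on $S$ for each $s\in S$ and joint action $\varepsilon=(\varepsilon_1,\dots,\varepsilon_n)\in\mathcal P([m])^n$, and $R:S\times\mathcal P([m])^n\times S\to\mathbb R$ a reward function. The original Dec-POMDP $M$: agent $j$'s action is a subset $\varepsilon_j\subseteq[m]$. A policy on $M$ is $\pi=(\pi_1,\dots,\pi_n)$ with each $\pi_j(\cdot\mid\omega_j)$ a probability distribution on $\mathcal P([m])$ for each $\omega_j\in\Omega_j$. Dynamics: $s_0\sim\rho$; at each step $t=0,\dots,T-1$, $\omega_t=(\omega_{t,1},\dots,\omega_{t,n})\sim O(\cdot\mid s_t)$, each agent independently draws $\varepsilon_{t,j}\sim\pi_j(\cdot\mid\omega_{t,j})$,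 then $s_{t+1}\sim P(s_t,\varepsilon_t,\cdot)$ and reward $R(s_t,\varepsilon_t,s_{t+1})$ is received. $V_\pi(\rho)=\mathbb E\big[\sum_{t=0}^{T-1}R(s_t,\varepsilon_t,s_{t+1})\big]$. The sequential-choice Dec-POMDP $M'$: a policy on $M'$ is $\pi'=(\pi'_1,\dots,\pi'_n)$ where, for each $\omega_j\in\Omega_j$ and $E\subseteq[m]$, $\pi'_j(\cdot\mid\omega_j,E)$ is a probability distribution on $([m]\setminus E)\cup\{\dagger\}$. Dynamics: $s_0\sim\rho$; each round $t=0,\dots,T-1$: an observation $\omega_t\sim O(\cdot\mid s_t)$ is drawn and stays fixed during the round; all selections $\varepsilon_j$ start at $\varnothing$ and no agent is finished. At each micro-step every unfinished agent $j$ independently draws $a_j\sim\pi'_j(\cdot\mid\omega_{t,j},\varepsilon_j)$; if $a_j\in[m]$ then $\varepsilon_j\leftarrow\varepsilon_j\cup\{a_j\}$, if $a_j=\dagger$ agent $j$ becomes finished; the underlying state does not change and reward $0$ is received. When all agents are finished with selections $\varepsilon=(\varepsilon_1,\dots,\varepsilon_n)$, $s_{t+1}\sim P(s_t,\varepsilon,\cdot)$, reward $R(s_t,\varepsilon,s_{t+1})$ is received, and selections are reset to $\varnothing$. $V'_{\pi'}(\rho)$ is the expected total reward over the $T$ rounds. Policy transposition: for a policy $\pi'$ on $M'$, $\phi(\pi')$ is the policy on $M$ with, for each agent $j$, $\omega\in\Omega_j$ and $\varepsilon\subseteq[m]$ with $|\varepsilon|=p$, \[\phi_j(\pi')(\varepsilon\mid\omega)=\sum_{(i_1,\dots,i_p)}\Big(\prod_{l=0}^{p-1}\pi'_j\big(i_{l+1}\mid\omega,\{i_1,\dots,i_l\}\big)\Big)\,\pi'_j(\dagger\mid\omega,\varepsilon),\]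 where the sum ranges over all $p!$ orderings $(i_1,\dots,i_p)$ of the elements of $\varepsilon$ (for $\varepsilon=\varnothing$ this is $\pi'_j(\dagger\mid\omega,\varnothing)$). *)

theory Defs
  imports "HOL-Probability.Probability"
begin

text \<open>Agents are 1..n, targets are 1..m. Joint observations and joint actions are
functions on nat; only agents in {1..n} matter.  Joint actions are normalised to
the empty selection outside {1..n}. The stop symbol is None (targets are Some i).\<close>

definition valid_M_policy ::
  "nat \<Rightarrow> nat \<Rightarrow> (nat \<Rightarrow> 'o \<Rightarrow> nat set pmf) \<Rightarrow> bool" where
  "valid_M_policy n m \<pi> \<longleftrightarrow>
     (\<forall>j\<in>{1..n}. \<forall>\<omega>. set_pmf (\<pi> j \<omega>) \<subseteq> Pow {1..m})"

definition valid_M'_policy ::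
  "nat \<Rightarrow> nat \<Rightarrow> (nat \<Rightarrow> 'o \<Rightarrow> nat set \<Rightarrow> nat option pmf) \<Rightarrow> bool" where
  "valid_M'_policy n m \<pi>' \<longleftrightarrow>
     (\<forall>j\<in>{1..n}. \<forall>\<omega> E. E \<subseteq> {1..m} \<longrightarrow>
        set_pmf (\<pi>' j \<omega> E) \<subseteq> Some ` ({1..m} - E) \<union> {None})"

definition joint_action ::
  "nat \<Rightarrow> (nat \<Rightarrow> 'o \<Rightarrow> nat set pmf) \<Rightarrow> (nat \<Rightarrow> 'o) \<Rightarrow> (nat \<Rightarrow> nat set) pmf" where
  "joint_action n \<pi> \<omega> = Pi_pmf {1..n} {} (\<lambda>j. \<pi> j (\<omega> j))"

fun val_M ::
  "nat \<Rightarrow> ('s \<Rightarrow> (nat \<Rightarrow> 'o) pmf) \<Rightarrow> ('s \<Rightarrow> (nat \<Rightarrow> nat set) \<Rightarrow> 's pmf)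
   \<Rightarrow> ('s \<Rightarrow> (nat \<Rightarrow> nat set) \<Rightarrow> 's \<Rightarrow> real) \<Rightarrow> (nat \<Rightarrow> 'o \<Rightarrow> nat set pmf)
   \<Rightarrow> nat \<Rightarrow> 's \<Rightarrow> real" where
  "val_M n Obs P R \<pi> 0 s = 0"
| "val_M n Obs P R \<pi> (Suc t) s =
     measure_pmf.expectation (Obs s) (\<lambda>\<omega>.
       measure_pmf.expectation (joint_action n \<pi> \<omega>) (\<lambda>\<epsilon>.
         measure_pmf.expectation (P s \<epsilon>) (\<lambda>s'. R s \<epsilon> s' + val_M n Obs P R \<pi> t s')))"

definition V_M ::
  "nat \<Rightarrow> ('s \<Rightarrow> (nat \<Rightarrow> 'o) pmf) \<Rightarrow> ('s \<Rightarrow> (nat \<Rightarrow> nat set) \<Rightarrow> 's pmf)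
   \<Rightarrow> ('s \<Rightarrow> (nat \<Rightarrow> nat set) \<Rightarrow> 's \<Rightarrow> real) \<Rightarrow> nat \<Rightarrow> (nat \<Rightarrow> 'o \<Rightarrow> nat set pmf)
   \<Rightarrow> 's pmf \<Rightarrow> real" where
  "V_M n Obs P R T \<pi> \<rho> = measure_pmf.expectation \<rho> (val_M n Obs P R \<pi> T)"

text \<open>Sequential-choice Dec-POMDP M'. A configuration maps each agent to
(current selection, finished flag).  One micro-step: every unfinished agent draws
independently; finished agents stay put.\<close>
definition micro_agent ::
  "(nat \<Rightarrow> 'o \<Rightarrow> nat set \<Rightarrow> nat option pmf) \<Rightarrow> nat \<Rightarrow> 'o \<Rightarrow> nat set \<times> bool
   \<Rightarrow> (nat set \<times> bool) pmf" where
  "micro_agent \<pi>' j \<omega> c =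
     (if snd c then return_pmf (fst c, True)
      else map_pmf (\<lambda>a. case a of None \<Rightarrow> (fst c, True) | Some i \<Rightarrow> (insert i (fst c), False))
             (\<pi>' j \<omega> (fst c)))"

definition micro_step ::
  "nat \<Rightarrow> (nat \<Rightarrow> 'o \<Rightarrow> nat set \<Rightarrow> nat option pmf) \<Rightarrow> (nat \<Rightarrow> 'o)
   \<Rightarrow> (nat \<Rightarrow> nat set \<times> bool) \<Rightarrow> (nat \<Rightarrow> nat set \<times> bool) pmf" where
  "micro_step n \<pi>' \<omega> c = Pi_pmf {1..n} ({}, True) (\<lambda>j. micro_agent \<pi>' j (\<omega> j) (c j))"

definition init_cfg :: "nat \<Rightarrow> nat \<Rightarrow> nat set \<times> bool" where
  "init_cfg n = (\<lambda>j. ({}, j \<notin> {1..n}))"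

text \<open>Each agent makes at most m+1 micro-steps (each non-stop draw adds a new
target from {1..m}); after all agents are finished the micro-step is the identity,
so running m+1 micro-steps yields the distribution of the final selections.\<close>
definition round_sel ::
  "nat \<Rightarrow> nat \<Rightarrow> (nat \<Rightarrow> 'o \<Rightarrow> nat set \<Rightarrow> nat option pmf) \<Rightarrow> (nat \<Rightarrow> 'o)
   \<Rightarrow> (nat \<Rightarrow> nat set) pmf" where
  "round_sel n m \<pi>' \<omega> =
     map_pmf (\<lambda>c j. fst (c j))
       (((\<lambda>p. bind_pmf p (micro_step n \<pi>' \<omega>)) ^^ (m + 1)) (return_pmf (init_cfg n)))"

fun val_M' ::
  "nat \<Rightarrow> nat \<Rightarrow> ('s \<Rightarrow> (nat \<Rightarrow> 'o) pmf) \<Rightarrow> ('s \<Rightarrow> (nat \<Rightarrow> nat set) \<Rightarrow> 's pmf)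
   \<Rightarrow> ('s \<Rightarrow> (nat \<Rightarrow> nat set) \<Rightarrow> 's \<Rightarrow> real) \<Rightarrow> (nat \<Rightarrow> 'o \<Rightarrow> nat set \<Rightarrow> nat option pmf)
   \<Rightarrow> nat \<Rightarrow> 's \<Rightarrow> real" where
  "val_M' n m Obs P R \<pi>' 0 s = 0"
| "val_M' n m Obs P R \<pi>' (Suc t) s =
     measure_pmf.expectation (Obs s) (\<lambda>\<omega>.
       measure_pmf.expectation (round_sel n m \<pi>' \<omega>) (\<lambda>\<epsilon>.
         measure_pmf.expectation (P s \<epsilon>) (\<lambda>s'. R s \<epsilon> s' + val_M' n m Obs P R \<pi>' t s')))"

definition V_M' ::
  "nat \<Rightarrow> nat \<Rightarrow> ('s \<Rightarrow> (nat \<Rightarrow> 'o) pmf) \<Rightarrow> ('s \<Rightarrow> (nat \<Rightarrow> nat set) \<Rightarrow> 's pmf)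
   \<Rightarrow> ('s \<Rightarrow> (nat \<Rightarrow> nat set) \<Rightarrow> 's \<Rightarrow> real) \<Rightarrow> nat
   \<Rightarrow> (nat \<Rightarrow> 'o \<Rightarrow> nat set \<Rightarrow> nat option pmf) \<Rightarrow> 's pmf \<Rightarrow> real" where
  "V_M' n m Obs P R T \<pi>' \<rho> = measure_pmf.expectation \<rho> (val_M' n m Obs P R \<pi>' T)"

definition phi_val ::
  "(nat \<Rightarrow> 'o \<Rightarrow> nat set \<Rightarrow> nat option pmf) \<Rightarrow> nat \<Rightarrow> 'o \<Rightarrow> nat set \<Rightarrow> real" where
  "phi_val \<pi>' j \<omega> \<epsilon> =
     (\<Sum>xs\<in>{xs. distinct xs \<and> set xs = \<epsilon>}.
        \<Prod>l<length xs. pmf (\<pi>' j \<omega> (set (take l xs))) (Some (xs ! l)))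
     * pmf (\<pi>' j \<omega> \<epsilon>) None"

definition phi ::
  "(nat \<Rightarrow> 'o \<Rightarrow> nat set \<Rightarrow> nat option pmf) \<Rightarrow> nat \<Rightarrow> 'o \<Rightarrow> nat set pmf" where
  "phi \<pi>' j \<omega> = embed_pmf (phi_val \<pi>' j \<omega>)"

end

theory Submission
  imports Defs "HOL-Combinatorics.Multiset_Permutations"
begin

(* A round of M' is a product over the agents of independent one-agent selection processes,
   so everything reduces to the distribution of one agent's final selection.  Running a
   sequential policy q from the empty selection ends in \<epsilon> with probability (sum over the
   orderings of \<epsilon> of the product of the choice probabilities) times the probability of
   stopping at \<epsilon>, which is phi q; hence a policy of M' and its transposition have the same
   value.  Conversely, a policy p of M is realised by the sequential policy that announces the
   elements of a p-distributed selection in increasing order: given the selection E so far,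
   the next element is the least new element of a draw from p conditioned on extending E by
   elements above E.  So every value of M is a value of M', and optimality transfers. *)

subsection \<open>Iterated kernels and conditional distributions\<close>

lemma funpow_bind_pmf:
  fixes K :: "'a \<Rightarrow> 'a pmf"
  shows "((\<lambda>p. bind_pmf p K) ^^ k) p = bind_pmf p (\<lambda>c. ((\<lambda>p. bind_pmf p K) ^^ k) (return_pmf c))"
proof (induction k arbitrary: p)
  case 0
  then show ?case by (simp add: bind_return_pmf')
next
  case (Suc k)
  have "((\<lambda>p. bind_pmf p K) ^^ Suc k) p = bind_pmf (((\<lambda>p. bind_pmf p K) ^^ k) p) K"
    by simp
  also have "\<dots> = bind_pmf p (\<lambda>c. bind_pmf (((\<lambda>p. bind_pmf p K) ^^ k) (return_pmf c)) K)"
    by (subst Suc) (simp add: bind_assoc_pmf)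
  finally show ?case by simp
qed

lemma funpow_bind_pmf_Suc_return:
  "((\<lambda>p. bind_pmf p K) ^^ Suc k) (return_pmf c)
     = bind_pmf (K c) (\<lambda>d. ((\<lambda>p. bind_pmf p K) ^^ k) (return_pmf d))"
  by (simp only: funpow_Suc_right o_def bind_return_pmf funpow_bind_pmf[where p = "K c"])

lemma funpow_bind_Pi_pmf:
  assumes "finite I" and "\<And>j. j \<notin> I \<Longrightarrow> c0 j = d"
  shows "((\<lambda>p. bind_pmf p (\<lambda>c. Pi_pmf I d (\<lambda>j. K j (c j)))) ^^ k) (return_pmf c0)
       = Pi_pmf I d (\<lambda>j. ((\<lambda>p. bind_pmf p (K j)) ^^ k) (return_pmf (c0 j)))"
proof (induction k)
  case 0
  have "(\<lambda>j. if j \<in> I then c0 j else d) = c0"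
    using assms(2) by auto
  then show ?case
    using assms(1) by simp
next
  case (Suc k)
  have "((\<lambda>p. bind_pmf p (\<lambda>c. Pi_pmf I d (\<lambda>j. K j (c j)))) ^^ Suc k) (return_pmf c0)
      = bind_pmf (Pi_pmf I d (\<lambda>j. ((\<lambda>p. bind_pmf p (K j)) ^^ k) (return_pmf (c0 j))))
          (\<lambda>c. Pi_pmf I d (\<lambda>j. K j (c j)))"
    by (simp add: Suc)
  also have "\<dots> = Pi_pmf I d (\<lambda>j. bind_pmf (((\<lambda>p. bind_pmf p (K j)) ^^ k) (return_pmf (c0 j))) (K j))"
    by (rule Pi_pmf_bind[symmetric, OF assms(1)])
  finally show ?case
    by simp
qed

lemma measure_cond_pmf:
  assumes "set_pmf p \<inter> A \<noteq> {}"
  shows "measure (cond_pmf p A) B = measure p (A \<inter> B) / measure p A"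
  unfolding cond_pmf.rep_eq[OF assms]
  by (rule measure_uniform_measure) (simp_all add: emeasure_measure_pmf_not_zero[OF assms])

lemma cond_cond_pmf:
  assumes "set_pmf p \<inter> A \<inter> B \<noteq> {}"
  shows "cond_pmf (cond_pmf p A) B = cond_pmf p (A \<inter> B)"
proof (rule pmf_eqI)
  fix x
  have A: "set_pmf p \<inter> A \<noteq> {}" and AB: "set_pmf p \<inter> (A \<inter> B) \<noteq> {}"
    using assms by auto
  then have B: "set_pmf (cond_pmf p A) \<inter> B \<noteq> {}"
    using assms by auto
  obtain x0 where "x0 \<in> set_pmf p" "x0 \<in> A"
    using A by blast
  then have "measure p A > 0"
    by (rule measure_pmf_posI)
  then show "pmf (cond_pmf (cond_pmf p A) B) x = pmf (cond_pmf p (A \<inter> B)) x"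
    by (simp add: pmf_cond[OF A] pmf_cond[OF B] pmf_cond[OF AB] measure_cond_pmf[OF A])
qed

lemma cond_pmf_cong:
  assumes "set_pmf p \<inter> A \<noteq> {}" and "set_pmf p \<inter> A = set_pmf p \<inter> B"
  shows "cond_pmf p A = cond_pmf p B"
proof (rule pmf_eqI)
  fix x
  have B: "set_pmf p \<inter> B \<noteq> {}"
    using assms by auto
  have "measure p A = measure p B"
    by (metis assms(2) inf_commute measure_Int_set_pmf)
  moreover have "x \<in> set_pmf p \<Longrightarrow> x \<in> A \<longleftrightarrow> x \<in> B"
    using assms(2) by blast
  ultimately show "pmf (cond_pmf p A) x = pmf (cond_pmf p B) x"
    by (cases "x \<in> set_pmf p") (auto simp: pmf_cond[OF assms(1)] pmf_cond[OF B] set_pmf_iff)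
qed

lemma cond_pmf_UNIV: "cond_pmf p UNIV = p"
  by (rule pmf_eqI) (simp add: pmf_cond set_pmf_not_empty)

subsection \<open>One agent's selection process\<close>

definition agent_step :: "(nat set \<Rightarrow> nat option pmf) \<Rightarrow> nat set \<times> bool \<Rightarrow> (nat set \<times> bool) pmf" where
  "agent_step q c =
     (if snd c then return_pmf (fst c, True)
      else map_pmf (\<lambda>a. case a of None \<Rightarrow> (fst c, True) | Some i \<Rightarrow> (insert i (fst c), False))
             (q (fst c)))"

definition agent_run :: "(nat set \<Rightarrow> nat option pmf) \<Rightarrow> nat \<Rightarrow> nat set \<times> bool \<Rightarrow> (nat set \<times> bool) pmf" where
  "agent_run q k c = ((\<lambda>p. bind_pmf p (agent_step q)) ^^ k) (return_pmf c)"

definition valid_seq_policy :: "nat \<Rightarrow> (nat set \<Rightarrow> nat option pmf) \<Rightarrow> bool" where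
  "valid_seq_policy m q \<longleftrightarrow>
     (\<forall>E. E \<subseteq> {1..m} \<longrightarrow> set_pmf (q E) \<subseteq> Some ` ({1..m} - E) \<union> {None})"

lemma agent_run_0: "agent_run q 0 c = return_pmf c"
  by (simp add: agent_run_def)

lemma agent_run_Suc: "agent_run q (Suc k) c = bind_pmf (agent_step q c) (agent_run q k)"
  unfolding agent_run_def by (rule funpow_bind_pmf_Suc_return)

lemma agent_run_finished: "agent_run q k (E, True) = return_pmf (E, True)"
  by (induction k) (simp_all add: agent_run_0 agent_run_Suc agent_step_def bind_return_pmf)

lemma agent_run_Suc_unfinished:
  "agent_run q (Suc k) (E, False) =
     bind_pmf (q E) (\<lambda>a. agent_run q k (case a of None \<Rightarrow> (E, True) | Some i \<Rightarrow> (insert i E, False)))"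
  by (simp add: agent_run_Suc agent_step_def bind_map_pmf o_def)

lemma round_sel_eq_Pi_pmf:
  "round_sel n m \<pi>' \<omega> =
     Pi_pmf {1..n} {} (\<lambda>j. map_pmf fst (agent_run (\<pi>' j (\<omega> j)) (m + 1) ({}, False)))"
proof -
  have "micro_agent \<pi>' j (\<omega> j) = agent_step (\<pi>' j (\<omega> j))" for j
    by (rule ext) (simp add: micro_agent_def agent_step_def)
  then have "((\<lambda>p. bind_pmf p (micro_step n \<pi>' \<omega>)) ^^ (m + 1)) (return_pmf (init_cfg n))
      = Pi_pmf {1..n} ({}, True) (\<lambda>j. agent_run (\<pi>' j (\<omega> j)) (m + 1) (init_cfg n j))"
    unfolding micro_step_def agent_run_def
    by (subst funpow_bind_Pi_pmf) (auto simp: init_cfg_def)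
  also have "\<dots> = Pi_pmf {1..n} ({}, True) (\<lambda>j. agent_run (\<pi>' j (\<omega> j)) (m + 1) ({}, False))"
    by (rule Pi_pmf_cong) (auto simp: init_cfg_def)
  finally have iterate: "((\<lambda>p. bind_pmf p (micro_step n \<pi>' \<omega>)) ^^ (m + 1)) (return_pmf (init_cfg n))
      = Pi_pmf {1..n} ({}, True) (\<lambda>j. agent_run (\<pi>' j (\<omega> j)) (m + 1) ({}, False))" .
  have fst_comp: "(\<lambda>c j. fst (c j)) = (\<lambda>h. fst \<circ> h)"
    by (simp add: fun_eq_iff)
  show ?thesis
    unfolding round_sel_def iterate fst_comp by (rule Pi_pmf_map[symmetric]) auto
qed

lemma set_pmf_agent_run_subset:
  assumes "valid_seq_policy m q" and "E \<subseteq> {1..m}"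
  shows "set_pmf (agent_run q k (E, b)) \<subseteq> {c. fst c \<subseteq> {1..m}}"
  using assms(2)
proof (induction k arbitrary: E b)
  case 0
  then show ?case by (simp add: agent_run_0)
next
  case (Suc k)
  have "set_pmf (agent_run q k (case a of None \<Rightarrow> (E, True) | Some i \<Rightarrow> (insert i E, False)))
      \<subseteq> {c. fst c \<subseteq> {1..m}}" if "a \<in> set_pmf (q E)" for a
  proof (cases a)
    case None
    then show ?thesis
      using Suc.prems by (simp add: agent_run_finished)
  next
    case (Some i)
    then have "insert i E \<subseteq> {1..m}"
      using that assms(1) Suc.prems unfolding valid_seq_policy_def by blast
    then show ?thesis
      using Suc.IH Some by simp
  qed
  then show ?case
    using Suc.prems by (cases b) (auto simp: agent_run_Suc_unfinished agent_run_finished)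
qed

lemma set_pmf_agent_run_mono: "set_pmf (agent_run q k (E, b)) \<subseteq> {c. E \<subseteq> fst c}"
proof (induction k arbitrary: E b)
  case 0
  then show ?case by (simp add: agent_run_0)
next
  case (Suc k)
  have "set_pmf (agent_run q k (case a of None \<Rightarrow> (E, True) | Some i \<Rightarrow> (insert i E, False)))
      \<subseteq> {c. E \<subseteq> fst c}" for a
    using Suc.IH by (cases a) (force simp: agent_run_finished)+
  then show ?case
    by (cases b) (auto simp: agent_run_Suc_unfinished agent_run_finished)
qed

subsection \<open>The final selection of a sequential policy\<close>

definition ordering_weight :: "(nat set \<Rightarrow> nat option pmf) \<Rightarrow> nat set \<Rightarrow> nat set \<Rightarrow> real" where
  "ordering_weight q E \<epsilon> = (\<Sum>xs\<in>permutations_of_set (\<epsilon> - E).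
      \<Prod>l<length xs. pmf (q (E \<union> set (take l xs))) (Some (xs ! l)))"

lemma ordering_weight_self: "ordering_weight q E E = 1"
  by (simp add: ordering_weight_def)

lemma ordering_weight_insert:
  assumes "E \<subset> \<epsilon>" and "finite \<epsilon>"
  shows "ordering_weight q E \<epsilon> = (\<Sum>i\<in>\<epsilon> - E. pmf (q E) (Some i) * ordering_weight q (insert i E) \<epsilon>)"
proof -
  define f where "f xs = (\<Prod>l<length xs. pmf (q (E \<union> set (take l xs))) (Some (xs ! l)))" for xs
  have f_Cons: "f (i # ys) = pmf (q E) (Some i) *
      (\<Prod>l<length ys. pmf (q (insert i E \<union> set (take l ys))) (Some (ys ! l)))" for i ys
    unfolding f_def by (simp add: prod.lessThan_Suc_shift del: prod.lessThan_Suc)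
  have "\<epsilon> - E \<noteq> {}"
    using assms(1) by blast
  then have "ordering_weight q E \<epsilon> = sum f (\<Union>i\<in>\<epsilon> - E. (#) i ` permutations_of_set (\<epsilon> - E - {i}))"
    unfolding ordering_weight_def f_def by (subst permutations_of_set_nonempty) simp_all
  also have "\<dots> = (\<Sum>i\<in>\<epsilon> - E. sum f ((#) i ` permutations_of_set (\<epsilon> - E - {i})))"
    by (rule sum.UNION_disjoint) (auto simp: assms(2))
  also have "\<dots> = (\<Sum>i\<in>\<epsilon> - E. pmf (q E) (Some i) * ordering_weight q (insert i E) \<epsilon>)"
  proof (rule sum.cong[OF refl])
    fix i
    have "\<epsilon> - E - {i} = \<epsilon> - insert i E"
      by blast
    then have "sum f ((#) i ` permutations_of_set (\<epsilon> - E - {i}))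
        = (\<Sum>ys\<in>permutations_of_set (\<epsilon> - insert i E). f (i # ys))"
      by (subst sum.reindex) (simp_all add: inj_on_def)
    then show "sum f ((#) i ` permutations_of_set (\<epsilon> - E - {i}))
        = pmf (q E) (Some i) * ordering_weight q (insert i E) \<epsilon>"
      by (simp only: f_Cons ordering_weight_def sum_distrib_left)
  qed
  finally show ?thesis .
qed

lemma pmf_agent_run_Suc_unfinished:
  assumes q: "valid_seq_policy m q" and "E \<subseteq> {1..m}" and "finite \<epsilon>"
  shows "pmf (map_pmf fst (agent_run q (Suc k) (E, False))) \<epsilon>
       = (if \<epsilon> = E then pmf (q E) None else 0)
         + (\<Sum>i\<in>\<epsilon> - E. pmf (map_pmf fst (agent_run q k (insert i E, False))) \<epsilon> * pmf (q E) (Some i))"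
proof -
  define F where "F a = pmf (map_pmf fst
      (agent_run q k (case a of None \<Rightarrow> (E, True) | Some i \<Rightarrow> (insert i E, False)))) \<epsilon>" for a
  have supp: "set_pmf (q E) \<subseteq> Some ` ({1..m} - E) \<union> {None}"
    using q assms(2) unfolding valid_seq_policy_def by blast
  have "pmf (map_pmf fst (agent_run q (Suc k) (E, False))) \<epsilon> = (\<integral>a. F a \<partial>q E)"
    by (simp add: agent_run_Suc_unfinished map_bind_pmf pmf_bind F_def)
  also have "\<dots> = (\<Sum>a\<in>insert None (Some ` (\<epsilon> - E)). F a * pmf (q E) a)"
  proof (rule integral_measure_pmf_real)
    fix a
    assume a: "a \<in> set_pmf (q E)" and "F a \<noteq> 0"
    then have "\<epsilon> \<in> fst ` set_pmf (agent_run q k (case a of None \<Rightarrow> (E, True) | Some i \<Rightarrow> (insert i E, False)))"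
      by (simp add: F_def pmf_eq_0_set_pmf)
    then show "a \<in> insert None (Some ` (\<epsilon> - E))"
      using a supp set_pmf_agent_run_mono by (cases a) fastforce+
  qed (simp add: assms(3))
  also have "\<dots> = (if \<epsilon> = E then pmf (q E) None else 0)
      + (\<Sum>i\<in>\<epsilon> - E. pmf (map_pmf fst (agent_run q k (insert i E, False))) \<epsilon> * pmf (q E) (Some i))"
    by (simp add: sum.reindex assms(3) F_def agent_run_finished)
  finally show ?thesis .
qed

lemma pmf_agent_run_selection:
  assumes q: "valid_seq_policy m q" and "E \<subseteq> {1..m}" and "m + 1 \<le> card E + k"
    and "finite \<epsilon>"
  shows "pmf (map_pmf fst (agent_run q k (E, False))) \<epsilon>
       = (if E \<subseteq> \<epsilon> then ordering_weight q E \<epsilon> * pmf (q \<epsilon>) None else 0)"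
  using assms(2,3)
proof (induction k arbitrary: E)
  case 0
  have "card E \<le> card {1..m}"
    using 0(1) by (intro card_mono) auto
  then show ?case
    using 0(2) by simp
next
  case (Suc k)
  let ?w = "\<lambda>i. if E \<subseteq> \<epsilon> then ordering_weight q (insert i E) \<epsilon> * pmf (q \<epsilon>) None else 0"
  have step: "pmf (map_pmf fst (agent_run q k (insert i E, False))) \<epsilon> * pmf (q E) (Some i)
      = ?w i * pmf (q E) (Some i)" if "i \<in> \<epsilon> - E" for i
  proof (cases "Some i \<in> set_pmf (q E)")
    case True
    then have "i \<in> {1..m} - E"
      using q Suc.prems(1) unfolding valid_seq_policy_def by blast
    then have "insert i E \<subseteq> {1..m}" and "m + 1 \<le> card (insert i E) + k"
      using Suc.prems finite_subset[OF Suc.prems(1)] by auto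
    then show ?thesis
      using that by (simp add: Suc.IH)
  qed (simp add: set_pmf_iff)
  have "pmf (map_pmf fst (agent_run q (Suc k) (E, False))) \<epsilon>
      = (if \<epsilon> = E then pmf (q E) None else 0) + (\<Sum>i\<in>\<epsilon> - E. ?w i * pmf (q E) (Some i))"
    by (simp only: pmf_agent_run_Suc_unfinished[OF q Suc.prems(1) assms(4)] sum.cong[OF refl step])
  also have "\<dots> = (if E \<subseteq> \<epsilon> then ordering_weight q E \<epsilon> * pmf (q \<epsilon>) None else 0)"
    using ordering_weight_insert[of E \<epsilon> q] assms(4)
    by (cases "\<epsilon> = E") (auto simp: ordering_weight_self sum_distrib_left sum_distrib_right mult_ac)
  finally show ?case .
qed

lemma phi_eq_agent_run:
  assumes "valid_seq_policy m (\<pi>' j \<omega>)"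
  shows "phi \<pi>' j \<omega> = map_pmf fst (agent_run (\<pi>' j \<omega>) (m + 1) ({}, False))"
proof -
  have "phi_val \<pi>' j \<omega> \<epsilon> = pmf (map_pmf fst (agent_run (\<pi>' j \<omega>) (m + 1) ({}, False))) \<epsilon>" for \<epsilon>
  proof (cases "finite \<epsilon>")
    case True
    have "{xs. distinct xs \<and> set xs = \<epsilon>} = permutations_of_set (\<epsilon> - {})"
      by (auto simp: permutations_of_set_def)
    then show ?thesis
      using True by (simp add: pmf_agent_run_selection[OF assms] phi_val_def ordering_weight_def)
  next
    case False
    have "\<not> \<epsilon> \<subseteq> {1..m}"
      using False finite_subset by blast
    then have "pmf (map_pmf fst (agent_run (\<pi>' j \<omega>) (m + 1) ({}, False))) \<epsilon> = 0"
      using set_pmf_agent_run_subset[OF assms, of "{}"] by (auto simp: pmf_eq_0_set_pmf)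
    moreover have no_orderings: "{xs. distinct xs \<and> set xs = \<epsilon>} = {}"
      using False by auto
    ultimately show ?thesis
      unfolding phi_val_def no_orderings by simp
  qed
  then have "phi_val \<pi>' j \<omega> = pmf (map_pmf fst (agent_run (\<pi>' j \<omega>) (m + 1) ({}, False)))"
    by (rule ext)
  then show ?thesis
    unfolding phi_def by (simp add: type_definition.Rep_inverse[OF td_pmf_embed_pmf])
qed

subsection \<open>Realising a policy of M by increasing announcements\<close>

definition extensions_above :: "nat set \<Rightarrow> nat set set" where
  "extensions_above E = {\<epsilon>. E \<subseteq> \<epsilon> \<and> (\<forall>x\<in>\<epsilon> - E. \<forall>y\<in>E. y < x)}"

definition next_element :: "nat set \<Rightarrow> nat set \<Rightarrow> nat option" where
  "next_element E \<epsilon> = (if \<epsilon> = E then None else Some (Min (\<epsilon> - E)))"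

text \<open>The first branch is never taken from a selection reachable from the empty one.\<close>

definition increasing_seq_policy :: "nat set pmf \<Rightarrow> nat set \<Rightarrow> nat option pmf" where
  "increasing_seq_policy p E =
     (if set_pmf p \<inter> extensions_above E = {} then return_pmf None
      else map_pmf (next_element E) (cond_pmf p (extensions_above E)))"

lemma extensions_above_empty [simp]: "extensions_above {} = UNIV"
  by (auto simp: extensions_above_def)

lemma Min_diff_in:
  assumes "\<epsilon> \<in> extensions_above E" and "\<epsilon> \<noteq> E" and "finite \<epsilon>"
  shows "Min (\<epsilon> - E) \<in> \<epsilon> - E"
  using assms by (intro Min_in) (auto simp: extensions_above_def)

lemma valid_seq_policy_increasing:
  assumes "set_pmf p \<subseteq> Pow {1..m}"
  shows "valid_seq_policy m (increasing_seq_policy p)"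
  unfolding valid_seq_policy_def
proof (intro allI impI)
  fix E :: "nat set"
  have next_element_in: "next_element E \<epsilon> \<in> Some ` ({1..m} - E) \<union> {None}"
    if "\<epsilon> \<in> set_pmf p" and "\<epsilon> \<in> extensions_above E" for \<epsilon>
  proof (cases "\<epsilon> = E")
    case False
    have "\<epsilon> \<subseteq> {1..m}"
      using that(1) assms by auto
    then show ?thesis
      using Min_diff_in[OF that(2) False] False finite_subset[of \<epsilon> "{1..m}"]
      by (auto simp: next_element_def)
  qed (simp add: next_element_def)
  show "set_pmf (increasing_seq_policy p E) \<subseteq> Some ` ({1..m} - E) \<union> {None}"
  proof (cases "set_pmf p \<inter> extensions_above E = {}")
    case False
    then have set_eq: "set_pmf (increasing_seq_policy p E)
        = next_element E ` (set_pmf p \<inter> extensions_above E)"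
      by (simp add: increasing_seq_policy_def)
    show ?thesis
      unfolding set_eq
    proof (rule image_subsetI)
      fix \<epsilon>
      assume "\<epsilon> \<in> set_pmf p \<inter> extensions_above E"
      then show "next_element E \<epsilon> \<in> Some ` ({1..m} - E) \<union> {None}"
        by (intro next_element_in) auto
    qed
  qed (simp add: increasing_seq_policy_def)
qed

lemma extensions_above_insert_Min:
  assumes "\<epsilon> \<in> extensions_above E" and "\<epsilon> \<noteq> E" and "finite \<epsilon>" and "finite y"
  shows "y \<in> extensions_above E \<and> next_element E y = Some (Min (\<epsilon> - E))
     \<longleftrightarrow> y \<in> extensions_above (insert (Min (\<epsilon> - E)) E)"
proof -
  define i where "i = Min (\<epsilon> - E)"
  have i: "i \<in> \<epsilon> - E"
    unfolding i_def using assms(1-3) by (rule Min_diff_in)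
  then have i_above: "\<forall>z\<in>E. z < i"
    using assms(1) by (auto simp: extensions_above_def)
  show ?thesis
    unfolding i_def[symmetric]
  proof
    assume y: "y \<in> extensions_above E \<and> next_element E y = Some i"
    then have "y \<noteq> E" and i_Min: "i = Min (y - E)"
      by (auto simp: next_element_def split: if_splits)
    then have "i \<in> y - E"
      using y Min_diff_in[of y E] assms(4) by auto
    moreover have "i \<le> x" if "x \<in> y - E" for x
      unfolding i_Min using that assms(4) by simp
    ultimately show "y \<in> extensions_above (insert i E)"
      using y by (force simp: extensions_above_def)
  next
    assume y: "y \<in> extensions_above (insert i E)"
    have "i \<le> x" if x: "x \<in> y - E" for x
    proof (cases "x = i")
      case False
      then have "x \<in> y - insert i E"
        using x by blast
      then have "i < x"
        using y unfolding extensions_above_def by blast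
      then show ?thesis
        by simp
    qed simp
    then have "Min (y - E) = i"
      using y i assms(4) by (intro Min_eqI) (auto simp: extensions_above_def)
    moreover have "y \<in> extensions_above E" and "y \<noteq> E"
      using y i i_above by (auto simp: extensions_above_def)
    ultimately show "y \<in> extensions_above E \<and> next_element E y = Some i"
      by (simp add: next_element_def)
  qed
qed

lemma cond_pmf_next_element:
  assumes fin: "\<forall>y\<in>set_pmf p. finite y" and \<epsilon>: "\<epsilon> \<in> set_pmf p \<inter> extensions_above E"
  shows "cond_pmf (cond_pmf p (extensions_above E)) {y. next_element E \<epsilon> = next_element E y}
       = (if \<epsilon> = E then return_pmf E else cond_pmf p (extensions_above (insert (Min (\<epsilon> - E)) E)))"
proof -
  let ?S = "{y. next_element E \<epsilon> = next_element E y}"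
  have ne: "set_pmf p \<inter> extensions_above E \<inter> ?S \<noteq> {}"
    using \<epsilon> by auto
  then have ne_cond: "set_pmf (cond_pmf p (extensions_above E)) \<inter> ?S \<noteq> {}"
    by (subst set_cond_pmf) auto
  show ?thesis
  proof (cases "\<epsilon> = E")
    case True
    then have "?S = {E}"
      by (auto simp: next_element_def split: if_splits)
    then have "set_pmf (cond_pmf (cond_pmf p (extensions_above E)) ?S) \<subseteq> {E}"
      using set_cond_pmf[OF ne_cond] by blast
    then show ?thesis
      using True by (simp add: set_pmf_subset_singleton)
  next
    case False
    have S: "y \<in> ?S \<longleftrightarrow> next_element E y = Some (Min (\<epsilon> - E))" for y
      using False by (auto simp: next_element_def)
    have "y \<in> extensions_above E \<inter> ?S \<longleftrightarrow> y \<in> extensions_above (insert (Min (\<epsilon> - E)) E)"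
      if "y \<in> set_pmf p" for y
      unfolding Int_iff S using extensions_above_insert_Min[of \<epsilon> E y] \<epsilon> False fin that by blast
    then have "set_pmf p \<inter> (extensions_above E \<inter> ?S)
        = set_pmf p \<inter> extensions_above (insert (Min (\<epsilon> - E)) E)"
      by blast
    then have "cond_pmf p (extensions_above E \<inter> ?S)
        = cond_pmf p (extensions_above (insert (Min (\<epsilon> - E)) E))"
      using ne by (intro cond_pmf_cong) auto
    then show ?thesis
      using False by (simp add: cond_cond_pmf[OF ne])
  qed
qed

lemma agent_run_increasing_seq_policy:
  assumes p: "set_pmf p \<subseteq> Pow {1..m}"
  shows "E \<subseteq> {1..m} \<Longrightarrow> set_pmf p \<inter> extensions_above E \<noteq> {} \<Longrightarrow> m + 1 \<le> card E + k \<Longrightarrow>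
     map_pmf fst (agent_run (increasing_seq_policy p) k (E, False)) = cond_pmf p (extensions_above E)"
proof (induction k arbitrary: E)
  case 0
  have "card E \<le> card {1..m}"
    using 0(1) by (intro card_mono) auto
  then show ?case
    using 0(3) by simp
next
  case (Suc k)
  define Q where "Q = cond_pmf p (extensions_above E)"
  have fin: "\<forall>y\<in>set_pmf p. finite y"
  proof
    fix y
    assume "y \<in> set_pmf p"
    then have "y \<subseteq> {1..m}"
      using p by auto
    then show "finite y"
      by (rule finite_subset) simp
  qed
  have "map_pmf fst (agent_run (increasing_seq_policy p) (Suc k) (E, False))
      = bind_pmf Q (\<lambda>\<epsilon>. map_pmf fst (agent_run (increasing_seq_policy p) k
          (case next_element E \<epsilon> of None \<Rightarrow> (E, True) | Some i \<Rightarrow> (insert i E, False))))"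
    using Suc.prems(2)
    by (simp add: agent_run_Suc_unfinished increasing_seq_policy_def map_bind_pmf bind_map_pmf Q_def)
  also have "\<dots> = bind_pmf Q (\<lambda>\<epsilon>. cond_pmf Q {y. next_element E \<epsilon> = next_element E y})"
  proof (rule bind_pmf_cong[OF refl])
    fix \<epsilon>
    assume "\<epsilon> \<in> set_pmf Q"
    then have \<epsilon>: "\<epsilon> \<in> set_pmf p \<inter> extensions_above E"
      using Suc.prems(2) by (simp add: Q_def)
    show "map_pmf fst (agent_run (increasing_seq_policy p) k
          (case next_element E \<epsilon> of None \<Rightarrow> (E, True) | Some i \<Rightarrow> (insert i E, False)))
        = cond_pmf Q {y. next_element E \<epsilon> = next_element E y}"
    proof (cases "\<epsilon> = E")
      case True
      then show ?thesis
        using cond_pmf_next_element[OF fin \<epsilon>]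
        by (simp add: Q_def next_element_def agent_run_finished)
    next
      case False
      define i where "i = Min (\<epsilon> - E)"
      have i: "i \<in> \<epsilon> - E"
        unfolding i_def using \<epsilon> False fin by (intro Min_diff_in) auto
      have "\<epsilon> \<subseteq> {1..m}"
        using \<epsilon> p by auto
      then have sub: "insert i E \<subseteq> {1..m}" and card: "m + 1 \<le> card (insert i E) + k"
        using i Suc.prems(1,3) finite_subset[OF Suc.prems(1)] by auto
      have "\<epsilon> \<in> extensions_above (insert i E)"
        using extensions_above_insert_Min[of \<epsilon> E \<epsilon>] \<epsilon> False fin
        by (auto simp: i_def next_element_def)
      then have "set_pmf p \<inter> extensions_above (insert i E) \<noteq> {}"
        using \<epsilon> by blast
      then have "map_pmf fst (agent_run (increasing_seq_policy p) k (insert i E, False))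
          = cond_pmf p (extensions_above (insert i E))"
        using Suc.IH[OF sub _ card] by blast
      moreover have "next_element E \<epsilon> = Some i"
        using False by (simp add: next_element_def i_def)
      ultimately show ?thesis
        using cond_pmf_next_element[OF fin \<epsilon>] False by (simp add: Q_def i_def)
    qed
  qed
  also have "\<dots> = Q"
  proof -
    have "{y'. next_element E y = next_element E y'} = {x. next_element E x = next_element E y}" for y
      by auto
    then show ?thesis
      by (intro bind_cond_pmf_cancel) auto
  qed
  finally show ?case
    unfolding Q_def .
qed

lemma agent_run_increasing_seq_policy_empty:
  assumes "set_pmf p \<subseteq> Pow {1..m}"
  shows "map_pmf fst (agent_run (increasing_seq_policy p) (m + 1) ({}, False)) = p"
  using agent_run_increasing_seq_policy[OF assms, of "{}" "m + 1"] set_pmf_not_empty[of p]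
  by (simp add: cond_pmf_UNIV)

subsection \<open>Values of the two processes\<close>

lemma valid_M'_policy_iff:
  "valid_M'_policy n m \<pi>' \<longleftrightarrow> (\<forall>j\<in>{1..n}. \<forall>\<omega>. valid_seq_policy m (\<pi>' j \<omega>))"
  by (auto simp: valid_M'_policy_def valid_seq_policy_def)

lemma V_M'_eq_V_M:
  assumes "\<And>\<omega>. round_sel n m \<pi>' \<omega> = joint_action n \<pi> \<omega>"
  shows "V_M' n m Obs P R T \<pi>' \<rho> = V_M n Obs P R T \<pi> \<rho>"
proof -
  have "val_M' n m Obs P R \<pi>' t s = val_M n Obs P R \<pi> t s" for t s
    by (induction t arbitrary: s) (simp_all add: assms)
  then have "val_M' n m Obs P R \<pi>' T = val_M n Obs P R \<pi> T"
    by (rule ext)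
  then show ?thesis
    by (simp add: V_M'_def V_M_def)
qed

lemma round_sel_eq_joint_action_phi:
  assumes "valid_M'_policy n m \<pi>'"
  shows "round_sel n m \<pi>' \<omega> = joint_action n (phi \<pi>') \<omega>"
proof -
  have "phi \<pi>' j (\<omega> j) = map_pmf fst (agent_run (\<pi>' j (\<omega> j)) (m + 1) ({}, False))"
    if "j \<in> {1..n}" for j
    using assms that by (intro phi_eq_agent_run) (simp add: valid_M'_policy_iff)
  then show ?thesis
    unfolding round_sel_eq_Pi_pmf joint_action_def by (intro Pi_pmf_cong) simp_all
qed

lemma valid_M_policy_phi:
  assumes "valid_M'_policy n m \<pi>'"
  shows "valid_M_policy n m (phi \<pi>')"
  unfolding valid_M_policy_def
proof (intro ballI allI)
  fix j \<omega>
  assume "j \<in> {1..n}"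
  then have q: "valid_seq_policy m (\<pi>' j \<omega>)"
    using assms by (simp add: valid_M'_policy_iff)
  show "set_pmf (phi \<pi>' j \<omega>) \<subseteq> Pow {1..m}"
    using set_pmf_agent_run_subset[OF q, of "{}"] by (auto simp: phi_eq_agent_run[of m \<pi>' j \<omega>, OF q])
qed

lemma valid_M'_policy_increasing:
  assumes "valid_M_policy n m \<pi>"
  shows "valid_M'_policy n m (\<lambda>j \<omega>. increasing_seq_policy (\<pi> j \<omega>))"
  using assms by (simp add: valid_M_policy_def valid_M'_policy_iff valid_seq_policy_increasing)

lemma round_sel_increasing:
  assumes "valid_M_policy n m \<pi>"
  shows "round_sel n m (\<lambda>j \<omega>. increasing_seq_policy (\<pi> j \<omega>)) \<omega> = joint_action n \<pi> \<omega>"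
proof -
  have "map_pmf fst (agent_run (increasing_seq_policy (\<pi> j (\<omega> j))) (m + 1) ({}, False)) = \<pi> j (\<omega> j)"
    if "j \<in> {1..n}" for j
    using assms that by (intro agent_run_increasing_seq_policy_empty) (simp add: valid_M_policy_def)
  then show ?thesis
    unfolding round_sel_eq_Pi_pmf joint_action_def by (intro Pi_pmf_cong) simp_all
qed

theorem mainTheorem3:
  fixes n m T :: nat
    and \<rho> :: "'s::finite pmf"
    and Om :: "nat \<Rightarrow> 'o set"
    and Obs :: "'s \<Rightarrow> (nat \<Rightarrow> 'o) pmf"
    and P :: "'s \<Rightarrow> (nat \<Rightarrow> nat set) \<Rightarrow> 's pmf"
    and R :: "'s \<Rightarrow> (nat \<Rightarrow> nat set) \<Rightarrow> 's \<Rightarrow> real"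
    and \<pi>s :: "nat \<Rightarrow> 'o \<Rightarrow> nat set \<Rightarrow> nat option pmf"
  assumes "n \<ge> 1" and "m \<ge> 1" and "T \<ge> 1"
    and "\<forall>j\<in>{1..n}. finite (Om j)"
    and "\<forall>s. set_pmf (Obs s) \<subseteq> Pi\<^sub>E {1..n} Om"
    and "valid_M'_policy n m \<pi>s"
    and "\<forall>\<pi>'. valid_M'_policy n m \<pi>' \<longrightarrow> V_M' n m Obs P R T \<pi>' \<rho> \<le> V_M' n m Obs P R T \<pi>s \<rho>"
  shows "valid_M_policy n m (phi \<pi>s) \<and>
    (\<forall>\<pi>. valid_M_policy n m \<pi> \<longrightarrow> V_M n Obs P R T \<pi> \<rho> \<le> V_M n Obs P R T (phi \<pi>s) \<rho>)"
proof (intro conjI allI impI)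
  show "valid_M_policy n m (phi \<pi>s)"
    using assms(6) by (rule valid_M_policy_phi)
  fix \<pi> :: "nat \<Rightarrow> 'o \<Rightarrow> nat set pmf"
  assume \<pi>: "valid_M_policy n m \<pi>"
  let ?\<pi>' = "\<lambda>j \<omega>. increasing_seq_policy (\<pi> j \<omega>)"
  have "V_M n Obs P R T \<pi> \<rho> = V_M' n m Obs P R T ?\<pi>' \<rho>"
    by (rule V_M'_eq_V_M[symmetric]) (rule round_sel_increasing[OF \<pi>])
  also have "\<dots> \<le> V_M' n m Obs P R T \<pi>s \<rho>"
    using assms(7) valid_M'_policy_increasing[OF \<pi>] by blast
  also have "\<dots> = V_M n Obs P R T (phi \<pi>s) \<rho>"
    by (rule V_M'_eq_V_M) (rule round_sel_eq_joint_action_phi[OF assms(6)])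
  finally show "V_M n Obs P R T \<pi> \<rho> \<le> V_M n Obs P R T (phi \<pi>s) \<rho>" .
qed

end
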